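(* Let $\vec\sigma$ be any preference profile over $m$ alternatives with $n$ agents, and $d$ any pseudometric consistent with $\vec\sigma$. Let $\tau<1/m$ and let $\mathcal A'\subseteq\mathcal A$ be the set of alternatives with plurality score at least $\tau n$. Then $$\frac{\min_{X\in\mathcal A'}\mathrm{SC}(X,d)}{\min_{X\in\mathcal A}\mathrm{SC}(X,d)}\le 1+\frac{2}{1-\tau m}.$$ Consequently, if $f$ is a deterministic voting rule with metric distortion at most $D$, then the alternative $f(\vec\sigma')$, where $\vec\sigma'$ is $\vec\sigma$ restricted to $\mathcal A'$, satisfies $\mathrm{SC}(f(\vec\sigma'),d)\le D\left(1+\frac{2}{1-\tau m}\right)\min_{X\in\mathcal A}\mathrm{SC}(X,d)$.
   Context: Setting: $\mathcal N$ is a set of $n$ agents and $\mathcal A$ a set of $m$ alternatives. Each agent $i$ has a strict ranking $\sigma_i$ of $\mathcal A$; $X\succ_i Y$ means $i$ ranks $X$ above $Y$. The plurality score of $X$ is the number of agents ranking $X$ first. Restricting $\vec\sigma$ to $\mathcal A'$ means each agent's ranking is restricted to $\mathcal A'$ (relative order preserved). Metric framework: $d:(\mathcal N\cup\mathcal A)^2\to\mathbb R_{\ge0}$ is a pseudometric ($d(a,a)=0$, symmetric, triangle inequality). $d$ is consistent with $\vec\sigma$ if $X\succ_i Y\Rightarrow d(i,X)\le d(i,Y)$ for all $i,X,Y$. $\mathrm{SC}(X,d)=\sum_{i\in\mathcal N}d(i,X)$. The metric distortion of a distribution $p$ on $d$ is $\mathbb E_{X\sim p}[\mathrm{SC}(X,d)]/\min_X\mathrm{SC}(X,d)$;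 the metric distortion of a rule $f$ is the supremum of this quantity for $p=f(\vec\sigma)$ over all profiles $\vec\sigma$ (any $n$, any alternative set) and all pseudometrics $d$ consistent with $\vec\sigma$. *)

theory Defs
  imports Complex_Main
begin

text \<open>A profile over agents N and alternatives A: each agent i in N has a strict
ranking of A, given as a list (best first) that enumerates A without repetition.\<close>
definition valid_profile :: "'n set \<Rightarrow> 'a set \<Rightarrow> ('n \<Rightarrow> 'a list) \<Rightarrow> bool" where
  "valid_profile N A \<sigma> \<longleftrightarrow> finite N \<and> N \<noteq> {} \<and> finite A \<and> A \<noteq> {} \<and>
     (\<forall>i\<in>N. distinct (\<sigma> i) \<and> set (\<sigma> i) = A)"

definition prefers :: "('n \<Rightarrow> 'a list) \<Rightarrow> 'n \<Rightarrow> 'a \<Rightarrow> 'a \<Rightarrow> bool" where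
  "prefers \<sigma> i X Y \<longleftrightarrow> (\<exists>k l. k < l \<and> l < length (\<sigma> i) \<and> \<sigma> i ! k = X \<and> \<sigma> i ! l = Y)"

definition plurality_score :: "'n set \<Rightarrow> ('n \<Rightarrow> 'a list) \<Rightarrow> 'a \<Rightarrow> nat" where
  "plurality_score N \<sigma> X = card {i\<in>N. \<sigma> i \<noteq> [] \<and> hd (\<sigma> i) = X}"

definition restrict_profile :: "('n \<Rightarrow> 'a list) \<Rightarrow> 'a set \<Rightarrow> 'n \<Rightarrow> 'a list" where
  "restrict_profile \<sigma> A' = (\<lambda>i. filter (\<lambda>x. x \<in> A') (\<sigma> i))"

text \<open>Points of the metric space are agents (Inl) and alternatives (Inr).\<close>
definition pseudometric_on :: "('n + 'a) set \<Rightarrow> (('n + 'a) \<Rightarrow> ('n + 'a) \<Rightarrow> real) \<Rightarrow> bool" where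
  "pseudometric_on S d \<longleftrightarrow>
     (\<forall>x\<in>S. \<forall>y\<in>S. 0 \<le> d x y) \<and> (\<forall>x\<in>S. d x x = 0) \<and>
     (\<forall>x\<in>S. \<forall>y\<in>S. d x y = d y x) \<and>
     (\<forall>x\<in>S. \<forall>y\<in>S. \<forall>z\<in>S. d x z \<le> d x y + d y z)"

definition consistent :: "'n set \<Rightarrow> 'a set \<Rightarrow> ('n \<Rightarrow> 'a list) \<Rightarrow> (('n + 'a) \<Rightarrow> ('n + 'a) \<Rightarrow> real) \<Rightarrow> bool" where
  "consistent N A \<sigma> d \<longleftrightarrow>
     pseudometric_on (Inl ` N \<union> Inr ` A) d \<and>
     (\<forall>i\<in>N. \<forall>X\<in>A. \<forall>Y\<in>A. prefers \<sigma> i X Y \<longrightarrow> d (Inl i) (Inr X) \<le> d (Inl i) (Inr Y))"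

definition SC :: "'n set \<Rightarrow> (('n + 'a) \<Rightarrow> ('n + 'a) \<Rightarrow> real) \<Rightarrow> 'a \<Rightarrow> real" where
  "SC N d X = (\<Sum>i\<in>N. d (Inl i) (Inr X))"

text \<open>Its metric distortion is at most D iff for every profile and every
consistent pseudometric, SC(f(profile)) \<le> D * min SC (the ratio form, cleared of denominators).\<close>
definition deterministic_rule :: "('n set \<Rightarrow> 'a set \<Rightarrow> ('n \<Rightarrow> 'a list) \<Rightarrow> 'a) \<Rightarrow> bool" where
  "deterministic_rule f \<longleftrightarrow> (\<forall>N A \<sigma>. valid_profile N A \<sigma> \<longrightarrow> f N A \<sigma> \<in> A)"

definition distortion_at_most ::
  "('n set \<Rightarrow> 'a set \<Rightarrow> ('n \<Rightarrow> 'a list) \<Rightarrow> 'a) \<Rightarrow> real \<Rightarrow> bool" where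
  "distortion_at_most f D \<longleftrightarrow>
     (\<forall>N A \<sigma> d. valid_profile N A \<sigma> \<longrightarrow> consistent N A \<sigma> d \<longrightarrow>
        SC N d (f N A \<sigma>) \<le> D * Min (SC N d ` A))"

end

theory Submission
  imports Defs "HOL-Library.Sublist"
begin

text \<open>Fix an optimal alternative \<open>Y\<close>. Every discarded alternative has fewer than \<open>\<tau> n\<close>
  first-place votes, so at least \<open>(1 - \<tau> m) n\<close> agents rank a surviving alternative first. Let
  \<open>i\<close> be the one among them closest to \<open>Y\<close>; averaging gives \<open>(1 - \<tau> m) n d(i, Y) \<le> SC(Y)\<close>.
  Since \<open>i\<close> is at least as close to its top choice \<open>t\<close> as to \<open>Y\<close>, every agent \<open>j\<close> has
  \<open>d(j, t) \<le> d(j, Y) + d(i, Y) + d(i, t) \<le> d(j, Y) + 2 d(i, Y)\<close>, and summing over \<open>j\<close> gives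
  \<open>SC(t) \<le> (1 + 2 / (1 - \<tau> m)) SC(Y)\<close>. For the second claim, the restricted profile is
  again consistent with \<open>d\<close>, so the distortion guarantee of \<open>f\<close> applies to it.\<close>

lemma nth_precedes_iff_subseq:
  "(\<exists>k l. k < l \<and> l < length xs \<and> xs ! k = x \<and> xs ! l = y) \<longleftrightarrow> subseq [x, y] xs"
proof
  assume "\<exists>k l. k < l \<and> l < length xs \<and> xs ! k = x \<and> xs ! l = y"
  then obtain k l where kl: "k < l" "l < length xs" "xs ! k = x" "xs ! l = y"
    by blast
  have split: "xs = take k xs @ x # drop (Suc k) xs"
    using kl by (metis id_take_nth_drop order.strict_trans)
  have "y \<in> set (drop (Suc k) xs)"
    using kl by (auto simp: in_set_conv_nth intro!: exI[of _ "l - Suc k"])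
  then have "subseq [x, y] (take k xs @ x # drop (Suc k) xs)"
    by (intro list_emb_append2) (simp add: subseq_singleton_left)
  then show "subseq [x, y] xs"
    using split by simp
next
  assume "subseq [x, y] xs"
  then obtain us vs where xs: "xs = us @ x # vs" and "subseq [y] vs"
    by (auto dest: list_emb_ConsD)
  then obtain j where "j < length vs" "vs ! j = y"
    by (auto simp: subseq_singleton_left in_set_conv_nth)
  then show "\<exists>k l. k < l \<and> l < length xs \<and> xs ! k = x \<and> xs ! l = y"
    by (intro exI[of _ "length us"] exI[of _ "length us + Suc j"]) (auto simp: xs nth_append)
qed

lemma prefers_iff_subseq: "prefers \<sigma> i x y \<longleftrightarrow> subseq [x, y] (\<sigma> i)"
  by (simp add: prefers_def nth_precedes_iff_subseq)

lemma prefers_restrict_profile: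
  "prefers (restrict_profile \<sigma> A') i x y \<Longrightarrow> prefers \<sigma> i x y"
  unfolding prefers_iff_subseq restrict_profile_def
  by (metis subseq_filter_left subseq_order.trans)

lemma valid_profile_hd_in:
  assumes "valid_profile N A \<sigma>" "i \<in> N"
  shows "\<sigma> i \<noteq> []" and "hd (\<sigma> i) \<in> A"
proof -
  show ne: "\<sigma> i \<noteq> []"
    using assms unfolding valid_profile_def by auto
  show "hd (\<sigma> i) \<in> A"
    using assms hd_in_set[OF ne] unfolding valid_profile_def by auto
qed

lemma valid_profile_prefers_hd:
  assumes "valid_profile N A \<sigma>" "i \<in> N" "X \<in> A" "X \<noteq> hd (\<sigma> i)"
  shows "prefers \<sigma> i (hd (\<sigma> i)) X"
proof -
  obtain h t where ht: "\<sigma> i = h # t"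
    using valid_profile_hd_in(1)[OF assms(1,2)] by (cases "\<sigma> i") auto
  have "X \<in> set t"
    using assms ht unfolding valid_profile_def by auto
  then show ?thesis
    by (simp add: prefers_iff_subseq ht subseq_singleton_left)
qed

lemma consistent_hd_closest:
  assumes "valid_profile N A \<sigma>" "consistent N A \<sigma> d" "i \<in> N" "X \<in> A"
  shows "d (Inl i) (Inr (hd (\<sigma> i))) \<le> d (Inl i) (Inr X)"
proof (cases "X = hd (\<sigma> i)")
  case False
  have "prefers \<sigma> i (hd (\<sigma> i)) X"
    using valid_profile_prefers_hd[OF assms(1,3,4) False] .
  then show ?thesis
    using assms(2-4) valid_profile_hd_in(2)[OF assms(1,3)] unfolding consistent_def by blast
qed simp

lemma pseudometric_on_dist_le_via:
  assumes "pseudometric_on S d" "a \<in> S" "b \<in> S" "c \<in> S" "e \<in> S"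
  shows "d a e \<le> d a b + d c b + d c e"
proof -
  have tri: "\<forall>x\<in>S. \<forall>y\<in>S. \<forall>z\<in>S. d x z \<le> d x y + d y z"
    and sym: "\<forall>x\<in>S. \<forall>y\<in>S. d x y = d y x"
    using assms(1) unfolding pseudometric_on_def by blast+
  have "d a e \<le> d a b + d b e" and "d b e \<le> d b c + d c e" and "d b c = d c b"
    using tri sym assms(2-5) by blast+
  then show ?thesis by linarith
qed

lemma SC_nonneg:
  assumes "consistent N A \<sigma> d" "X \<in> A"
  shows "0 \<le> SC N d X"
  using assms unfolding SC_def consistent_def pseudometric_on_def by (auto intro: sum_nonneg)

lemma SC_hd_le:
  assumes "valid_profile N A \<sigma>" "consistent N A \<sigma> d" "i \<in> N" "Y \<in> A"
  shows "SC N d (hd (\<sigma> i)) \<le> SC N d Y + 2 * real (card N) * d (Inl i) (Inr Y)"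
proof -
  have pm: "pseudometric_on (Inl ` N \<union> Inr ` A) d"
    using assms(2) unfolding consistent_def by blast
  have "d (Inl j) (Inr (hd (\<sigma> i))) \<le> d (Inl j) (Inr Y) + 2 * d (Inl i) (Inr Y)"
    if "j \<in> N" for j
  proof -
    have "hd (\<sigma> i) \<in> A"
      using valid_profile_hd_in(2)[OF assms(1,3)] .
    then have "d (Inl j) (Inr (hd (\<sigma> i)))
        \<le> d (Inl j) (Inr Y) + d (Inl i) (Inr Y) + d (Inl i) (Inr (hd (\<sigma> i)))"
      using pseudometric_on_dist_le_via[OF pm] that assms(3,4) by blast
    then show ?thesis
      using consistent_hd_closest[OF assms] by linarith
  qed
  then have "SC N d (hd (\<sigma> i)) \<le> (\<Sum>j\<in>N. d (Inl j) (Inr Y) + 2 * d (Inl i) (Inr Y))"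
    unfolding SC_def by (rule sum_mono)
  then show ?thesis
    by (simp add: SC_def sum.distrib)
qed

lemma exists_le_average:
  fixes f :: "'b \<Rightarrow> real"
  assumes "finite S" "S \<noteq> {}"
  shows "\<exists>i\<in>S. real (card S) * f i \<le> sum f S"
proof -
  obtain i where i: "i \<in> S" "f i = Min (f ` S)"
    using assms by (metis (no_types, lifting) Min_in finite_imageI image_iff image_is_empty)
  have "real (card S) * f i \<le> sum f S"
    using sum_bounded_below[of S "f i" f] assms(1) i by simp
  with i(1) show ?thesis ..
qed

lemma sum_plurality_score:
  assumes "valid_profile N A \<sigma>" "B \<subseteq> A"
  shows "(\<Sum>X\<in>B. plurality_score N \<sigma> X) = card {i\<in>N. hd (\<sigma> i) \<in> B}"
proof -
  have fin: "finite N" "finite B"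
    using assms unfolding valid_profile_def by (auto intro: finite_subset)
  have "(\<Sum>X\<in>B. plurality_score N \<sigma> X)
      = (\<Sum>X\<in>B. card {i\<in>{i\<in>N. hd (\<sigma> i) \<in> B}. hd (\<sigma> i) = X})"
    unfolding plurality_score_def using valid_profile_hd_in(1)[OF assms(1)]
    by (intro sum.cong) (auto intro!: arg_cong[where f = card])
  also have "\<dots> = card {i\<in>N. hd (\<sigma> i) \<in> B}"
    using sum.group[of "{i\<in>N. hd (\<sigma> i) \<in> B}" B "\<lambda>i. hd (\<sigma> i)" "\<lambda>_. 1::nat"] fin
    by auto
  finally show ?thesis .
qed

lemma card_top_choice_in_threshold_ge:
  assumes prof: "valid_profile N A \<sigma>" and "0 \<le> \<tau>"
  defines "A' \<equiv> {X \<in> A. \<tau> * real (card N) \<le> real (plurality_score N \<sigma> X)}"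
  shows "(1 - \<tau> * real (card A)) * real (card N) \<le> real (card {i\<in>N. hd (\<sigma> i) \<in> A'})"
proof -
  let ?s = "\<lambda>X. real (plurality_score N \<sigma> X)"
  have finA: "finite A" and sub: "A' \<subseteq> A"
    using prof unfolding valid_profile_def A'_def by auto
  have "{i\<in>N. hd (\<sigma> i) \<in> A} = N"
    using valid_profile_hd_in(2)[OF prof] by auto
  then have "real (card N) = (\<Sum>X\<in>A. ?s X)"
    using sum_plurality_score[OF prof subset_refl] by (metis of_nat_sum)
  also have "\<dots> = (\<Sum>X\<in>A'. ?s X) + (\<Sum>X\<in>A - A'. ?s X)"
    using sum.subset_diff[OF sub finA, of ?s] by (simp add: add.commute)
  also have "(\<Sum>X\<in>A'. ?s X) = real (card {i\<in>N. hd (\<sigma> i) \<in> A'})"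
    using sum_plurality_score[OF prof sub] by (metis of_nat_sum)
  also have "(\<Sum>X\<in>A - A'. ?s X) \<le> real (card (A - A')) * (\<tau> * real (card N))"
    using sum_bounded_above[of "A - A'" ?s "\<tau> * real (card N)"] unfolding A'_def by force
  also have "\<dots> \<le> real (card A) * (\<tau> * real (card N))"
    using assms(2) finA by (intro mult_right_mono) (auto intro: card_mono)
  finally show ?thesis
    by (simp add: algebra_simps)
qed

lemma exists_plurality_threshold_near_optimal:
  assumes prof: "valid_profile N A \<sigma>" and cons: "consistent N A \<sigma> d"
    and tau: "\<tau> * real (card A) < 1"
  defines "A' \<equiv> {X \<in> A. \<tau> * real (card N) \<le> real (plurality_score N \<sigma> X)}"
  shows "\<exists>X\<in>A'. SC N d X \<le> (1 + 2 / (1 - \<tau> * real (card A))) * Min (SC N d ` A)"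
proof -
  define c where "c = 1 - \<tau> * real (card A)"
  define n where "n = real (card N)"
  have c: "0 < c"
    using tau unfolding c_def by simp
  have finN: "finite N" and finA: "finite A" and "A \<noteq> {}"
    using prof unfolding valid_profile_def by auto
  then obtain Y where Y: "Y \<in> A" "SC N d Y = Min (SC N d ` A)"
    by (metis (no_types, lifting) Min_in finite_imageI image_iff image_is_empty)
  have opt: "0 \<le> SC N d Y"
    using SC_nonneg[OF cons Y(1)] .
  have "\<exists>X\<in>A'. SC N d X \<le> (1 + 2 / c) * SC N d Y"
  proof (cases "\<tau> \<le> 0")
    case True
    \<comment> \<open>Nothing is discarded; the counting bound would fail here, as \<open>(1 - \<tau> m) n > n\<close> for \<open>\<tau> < 0\<close>.\<close>
    have "\<tau> * real (card N) \<le> 0"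
      using True by (simp add: mult_nonpos_nonneg)
    then have "Y \<in> A'"
      using Y(1) unfolding A'_def by (auto intro: order_trans)
    moreover have "SC N d Y \<le> (1 + 2 / c) * SC N d Y"
      using opt c by (simp add: algebra_simps)
    ultimately show ?thesis ..
  next
    case False
    define S where "S = {i\<in>N. hd (\<sigma> i) \<in> A'}"
    have cardS: "c * n \<le> real (card S)"
      using card_top_choice_in_threshold_ge[OF prof, of \<tau>] False
      unfolding S_def c_def n_def A'_def by simp
    have "0 < n"
      using finN prof unfolding n_def valid_profile_def by (simp add: card_gt_0_iff)
    then have "0 < c * n"
      using c by simp
    then have "S \<noteq> {}"
      using cardS by auto
    then obtain i where i: "i \<in> S" and avg: "real (card S) * d (Inl i) (Inr Y)
        \<le> (\<Sum>j\<in>S. d (Inl j) (Inr Y))"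
      using exists_le_average[of S "\<lambda>j. d (Inl j) (Inr Y)"] finN unfolding S_def by auto
    have iN: "i \<in> N"
      using i unfolding S_def by simp
    have r: "0 \<le> d (Inl i) (Inr Y)"
      using cons iN Y(1) unfolding consistent_def pseudometric_on_def by blast
    have "(\<Sum>j\<in>S. d (Inl j) (Inr Y)) \<le> SC N d Y"
      unfolding SC_def S_def using finN cons Y(1)
      by (intro sum_mono2) (auto simp: consistent_def pseudometric_on_def)
    then have "c * n * d (Inl i) (Inr Y) \<le> SC N d Y"
      using avg cardS r by (meson mult_right_mono order_trans)
    then have "n * d (Inl i) (Inr Y) \<le> SC N d Y / c"
      using c by (simp add: field_simps)
    then have "SC N d (hd (\<sigma> i)) \<le> (1 + 2 / c) * SC N d Y"
      using SC_hd_le[OF prof cons iN Y(1)] unfolding n_def by (simp add: algebra_simps)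
    moreover have "hd (\<sigma> i) \<in> A'"
      using i unfolding S_def by simp
    ultimately show ?thesis ..
  qed
  then show ?thesis
    unfolding c_def Y(2) .
qed

lemma pseudometric_on_subset:
  "pseudometric_on S d \<Longrightarrow> T \<subseteq> S \<Longrightarrow> pseudometric_on T d"
  unfolding pseudometric_on_def by (simp add: subset_iff)

lemma valid_profile_restrict_profile:
  assumes "valid_profile N A \<sigma>" "A' \<subseteq> A" "A' \<noteq> {}"
  shows "valid_profile N A' (restrict_profile \<sigma> A')"
  using assms unfolding valid_profile_def restrict_profile_def by (auto intro: finite_subset)

lemma consistent_restrict_profile:
  assumes cons: "consistent N A \<sigma> d" and sub: "A' \<subseteq> A"
  shows "consistent N A' (restrict_profile \<sigma> A') d"
proof -
  have pm: "pseudometric_on (Inl ` N \<union> Inr ` A) d"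
    and mono: "\<forall>i\<in>N. \<forall>X\<in>A. \<forall>Y\<in>A. prefers \<sigma> i X Y \<longrightarrow> d (Inl i) (Inr X) \<le> d (Inl i) (Inr Y)"
    using cons unfolding consistent_def by auto
  have "pseudometric_on (Inl ` N \<union> Inr ` A') d"
    by (rule pseudometric_on_subset[OF pm]) (use sub in auto)
  moreover have "d (Inl i) (Inr X) \<le> d (Inl i) (Inr Y)"
    if "i \<in> N" "X \<in> A'" "Y \<in> A'" "prefers (restrict_profile \<sigma> A') i X Y" for i X Y
    using mono prefers_restrict_profile[OF that(4)] that(1-3) sub by blast
  ultimately show ?thesis
    unfolding consistent_def by blast
qed

lemma distortion_at_most_nonneg:
  fixes f :: "'n set \<Rightarrow> 'a set \<Rightarrow> ('n \<Rightarrow> 'a list) \<Rightarrow> 'a"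
  assumes "deterministic_rule f" "distortion_at_most f D"
  shows "0 \<le> D"
proof -
  fix i :: 'n and a :: 'a
  define d :: "'n + 'a \<Rightarrow> 'n + 'a \<Rightarrow> real" where "d = (\<lambda>x y. if x = y then 0 else 1)"
  have prof: "valid_profile {i} {a} (\<lambda>_. [a])"
    by (simp add: valid_profile_def)
  have "consistent {i} {a} (\<lambda>_. [a]) d"
    unfolding consistent_def pseudometric_on_def d_def prefers_def by auto
  then have "SC {i} d (f {i} {a} (\<lambda>_. [a])) \<le> D * Min (SC {i} d ` {a})"
    using assms(2) prof unfolding distortion_at_most_def by blast
  moreover have "f {i} {a} (\<lambda>_. [a]) = a"
    using assms(1) prof unfolding deterministic_rule_def by blast
  ultimately show ?thesis
    by (simp add: SC_def d_def)
qed

theorem mainTheorem2: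
  fixes N :: "'n set" and A :: "'a set" and \<sigma> :: "'n \<Rightarrow> 'a list"
    and d :: "('n + 'a) \<Rightarrow> ('n + 'a) \<Rightarrow> real" and \<tau> :: real
    and f :: "'n set \<Rightarrow> 'a set \<Rightarrow> ('n \<Rightarrow> 'a list) \<Rightarrow> 'a" and D :: real
  assumes prof: "valid_profile N A \<sigma>"
    and cons: "consistent N A \<sigma> d"
    and tau: "\<tau> < 1 / real (card A)"
  defines "A' \<equiv> {X \<in> A. \<tau> * real (card N) \<le> real (plurality_score N \<sigma> X)}"
  shows "Min (SC N d ` A') \<le> (1 + 2 / (1 - \<tau> * real (card A))) * Min (SC N d ` A)
    \<and> (deterministic_rule f \<and> distortion_at_most f D \<longrightarrow>
         SC N d (f N A' (restrict_profile \<sigma> A'))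
           \<le> D * (1 + 2 / (1 - \<tau> * real (card A))) * Min (SC N d ` A))"
proof -
  let ?bound = "(1 + 2 / (1 - \<tau> * real (card A))) * Min (SC N d ` A)"
  have "0 < card A"
    using prof unfolding valid_profile_def by (simp add: card_gt_0_iff)
  then have "\<tau> * real (card A) < 1"
    using tau by (simp add: field_simps)
  then obtain X where X: "X \<in> A'" "SC N d X \<le> ?bound"
    using exists_plurality_threshold_near_optimal[OF prof cons] unfolding A'_def by blast
  have sub: "A' \<subseteq> A" and "finite A"
    using prof unfolding A'_def valid_profile_def by auto
  then have near_opt: "Min (SC N d ` A') \<le> ?bound"
    using X by (meson Min_le finite_imageI finite_subset image_eqI order_trans)
  moreover have "SC N d (f N A' (restrict_profile \<sigma> A')) \<le> D * ?bound"
    if f: "deterministic_rule f" "distortion_at_most f D"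
  proof -
    have "SC N d (f N A' (restrict_profile \<sigma> A')) \<le> D * Min (SC N d ` A')"
      using f(2) valid_profile_restrict_profile[OF prof sub] consistent_restrict_profile[OF cons sub] X(1)
      unfolding distortion_at_most_def by blast
    also have "\<dots> \<le> D * ?bound"
      using near_opt distortion_at_most_nonneg[OF f] by (rule mult_left_mono)
    finally show ?thesis .
  qed
  ultimately show ?thesis
    by (simp add: mult.assoc)
qed

end
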